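(* Let $F:\mathbb{R}^n\rightrightarrows\mathbb{R}^n$ be a (possibly multi-valued) mapping. Consider the discrete-time system with state $x_t\in\mathbb{R}^n$, input $u_t\in\mathbb{R}^n$ and output $y_t\in\mathbb{R}^n$ given by $$x_{t+1}=x_t+u_t,\qquad y_t\in F(x_t+u_t),\qquad t\in\mathbb{N}_0 .$$ Then $F$ has a convex primitive, i.e. there exists a convex function $f:\mathbb{R}^n\to\mathbb{R}$ with $F(x)\subset\partial f(x)$ for all $x\in\mathbb{R}^n$, if and only if this system is passive.
   Context: A trajectory $t\mapsto(x_t,u_t,y_t)$, $t\in\mathbb{N}_0$, is admissible if $x_{t+1}=x_t+u_t$ and $y_t\in F(x_t+u_t)$ for all $t\in\mathbb{N}_0$. The system is passive if there exists a storage function $V:\mathbb{R}^n\to\mathbb{R}$ (which is not required to be nonnegative or bounded from below) such that $V(x_{t_2})\le V(x_{t_1})+\sum_{t=t_1}^{t_2-1}u_t^\top y_t$ for all admissible trajectories and all $t_1,t_2\in\mathbb{N}_0$ with $t_1\le t_2$. $\partial f$ denotes the subdifferential of the convex function $f$. *)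

theory Defs
  imports "HOL-Analysis.Analysis"
begin

definition subdiff :: "('a::euclidean_space \<Rightarrow> real) \<Rightarrow> 'a \<Rightarrow> 'a set" where
  "subdiff f x = {g. \<forall>z. f z \<ge> f x + inner g (z - x)}"

definition admissible ::
  "('a::euclidean_space \<Rightarrow> 'a set) \<Rightarrow> (nat \<Rightarrow> 'a) \<Rightarrow> (nat \<Rightarrow> 'a) \<Rightarrow> (nat \<Rightarrow> 'a) \<Rightarrow> bool" where
  "admissible F x u y \<longleftrightarrow> (\<forall>t. x (Suc t) = x t + u t \<and> y t \<in> F (x t + u t))"

text \<open>Passivity: existence of a real-valued storage function (no sign requirement).\<close>
definition passive_system :: "('a::euclidean_space \<Rightarrow> 'a set) \<Rightarrow> bool" where
  "passive_system F \<longleftrightarrow> (\<exists>V :: 'a \<Rightarrow> real. \<forall>x u y. admissible F x u y \<longrightarrow>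
     (\<forall>t1 t2. t1 \<le> t2 \<longrightarrow> V (x t2) \<le> V (x t1) + (\<Sum>t\<in>{t1..<t2}. inner (u t) (y t))))"

end

theory Submission
  imports Defs
begin

text \<open>
  If F is contained in the subdifferential of f, the subgradient inequality at x t + u t
  bounds the increase of f along one step by the supplied energy u t \<bullet> y t, so f itself is a
  storage function. Conversely, a storage function V, tested on the one-step trajectory from z
  to a with output g \<in> F a, satisfies V z \<ge> V a + g \<bullet> (z - a). Hence V majorises all the affine
  functions z \<mapsto> V a + g \<bullet> (z - a) with g \<in> F a; their pointwise supremum is convex, lies below V,
  and agrees with V at every a with F a \<noteq> {}, which makes each g \<in> F a a subgradient of it at a.
\<close>

definition storage_function :: "('a::euclidean_space \<Rightarrow> 'a set) \<Rightarrow> ('a \<Rightarrow> real) \<Rightarrow> bool" where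
  "storage_function F V \<longleftrightarrow> (\<forall>x u y. admissible F x u y \<longrightarrow>
     (\<forall>t1 t2. t1 \<le> t2 \<longrightarrow> V (x t2) \<le> V (x t1) + (\<Sum>t\<in>{t1..<t2}. inner (u t) (y t))))"

lemma passive_system_iff_storage_function: "passive_system F \<longleftrightarrow> (\<exists>V. storage_function F V)"
  by (simp add: passive_system_def storage_function_def)

lemma convex_on_cSUP:
  fixes f :: "'i \<Rightarrow> 'a::real_vector \<Rightarrow> real"
  assumes "I \<noteq> {}"
    and bdd: "\<And>x. x \<in> S \<Longrightarrow> bdd_above ((\<lambda>i. f i x) ` I)"
    and cvx: "\<And>i. i \<in> I \<Longrightarrow> convex_on S (f i)"
  shows "convex_on S (\<lambda>x. SUP i\<in>I. f i x)"
proof (rule convex_onI)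
  show "convex S"
    using assms(1) cvx convex_on_imp_convex by blast
next
  fix t :: real and x y
  assume t: "0 < t" "t < 1" and xy: "x \<in> S" "y \<in> S"
  show "(SUP i\<in>I. f i ((1 - t) *\<^sub>R x + t *\<^sub>R y)) \<le> (1 - t) * (SUP i\<in>I. f i x) + t * (SUP i\<in>I. f i y)"
  proof (rule cSUP_least[OF assms(1)])
    fix i assume i: "i \<in> I"
    have "f i ((1 - t) *\<^sub>R x + t *\<^sub>R y) \<le> (1 - t) * f i x + t * f i y"
      using convex_onD[OF cvx[OF i]] t xy by simp
    also have "\<dots> \<le> (1 - t) * (SUP i\<in>I. f i x) + t * (SUP i\<in>I. f i y)"
      using t cSUP_upper[OF i bdd[OF xy(1)]] cSUP_upper[OF i bdd[OF xy(2)]]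
      by (intro add_mono mult_left_mono) auto
    finally show "f i ((1 - t) *\<^sub>R x + t *\<^sub>R y) \<le> \<dots>" .
  qed
qed

lemma convex_on_affine_inner:
  fixes g a :: "'a::real_inner"
  assumes "convex S"
  shows "convex_on S (\<lambda>z. c + inner g (z - a))"
proof (rule convex_onI)
  fix t :: real and x y
  show "c + inner g ((1 - t) *\<^sub>R x + t *\<^sub>R y - a) \<le> (1 - t) * (c + inner g (x - a)) + t * (c + inner g (y - a))"
    by (simp add: inner_diff_right inner_add_right algebra_simps)
qed (fact assms)

lemma subdiff_step_le:
  assumes "g \<in> subdiff f (x + u)"
  shows "f (x + u) \<le> f x + inner u g"
proof -
  have "f x \<ge> f (x + u) + inner g (x - (x + u))"
    using assms unfolding subdiff_def by blast
  then show ?thesis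
    by (simp add: inner_commute)
qed

lemma storage_function_if_subdiff:
  assumes sub: "\<And>x. F x \<subseteq> subdiff f x"
  shows "storage_function F f"
  unfolding storage_function_def
proof (intro allI impI)
  fix x u y and t1 t2 :: nat
  assume adm: "admissible F x u y" and "t1 \<le> t2"
  from \<open>t1 \<le> t2\<close> show "f (x t2) \<le> f (x t1) + (\<Sum>t\<in>{t1..<t2}. inner (u t) (y t))"
  proof (induction t2 rule: dec_induct)
    case base
    show ?case by simp
  next
    case (step m)
    have "x (Suc m) = x m + u m" and "y m \<in> subdiff f (x m + u m)"
      using adm sub unfolding admissible_def by auto
    then have "f (x (Suc m)) \<le> f (x m) + inner (u m) (y m)"
      using subdiff_step_le by metis
    with step show ?case by simp
  qed
qed

lemma storage_function_subgradient_ineq: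
  assumes V: "storage_function F V" and g: "g \<in> F a"
  shows "V a + inner g (z - a) \<le> V z"
proof -
  define x where "x = (\<lambda>t::nat. if t = 0 then z else a)"
  define u where "u = (\<lambda>t::nat. if t = 0 then a - z else 0)"
  have "admissible F x u (\<lambda>_. g)"
    unfolding admissible_def x_def u_def using g by auto
  with V have "V (x 1) \<le> V (x 0) + (\<Sum>t\<in>{0..<1}. inner (u t) g)"
    unfolding storage_function_def by blast
  then show ?thesis
    by (simp add: x_def u_def inner_commute inner_diff_right)
qed

lemma convex_primitive_if_storage_function:
  assumes V: "storage_function F V"
  shows "\<exists>f. convex_on UNIV f \<and> (\<forall>x. F x \<subseteq> subdiff f x)"
proof -
  define G where "G = {(a, g). g \<in> F a}"
  define f where "f z = (SUP (a, g)\<in>G. V a + inner g (z - a))" for z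
  have bdd: "bdd_above ((\<lambda>(a, g). V a + inner g (z - a)) ` G)" for z
    using storage_function_subgradient_ineq[OF V] unfolding G_def
    by (intro bdd_aboveI[of _ "V z"]) auto
  have "convex_on UNIV f"
  proof (cases "G = {}")
    case True
    then have "f = (\<lambda>_. Sup {})"
      by (simp add: f_def fun_eq_iff)
    then show ?thesis
      by (simp add: convex_on_const)
  next
    case False
    then show ?thesis
      unfolding f_def using bdd
      by (intro convex_on_cSUP) (auto simp: convex_on_affine_inner)
  qed
  moreover have "g \<in> subdiff f a" if g: "g \<in> F a" for a g
  proof -
    have below_V: "f a \<le> V a"
      unfolding f_def using g storage_function_subgradient_ineq[OF V]
      by (intro cSUP_least) (auto simp: G_def)
    have above_affine: "V a + inner g (z - a) \<le> f z" for z
      unfolding f_def using cSUP_upper[OF _ bdd[of z], of "(a, g)"] g by (simp add: G_def)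
    have "f a + inner g (z - a) \<le> f z" for z
      using below_V above_affine[of z] by linarith
    then show ?thesis
      unfolding subdiff_def by blast
  qed
  ultimately show ?thesis
    by blast
qed

theorem theorem3:
  fixes F :: "real ^ 'n \<Rightarrow> (real ^ 'n) set"
  shows "(\<exists>f :: real ^ 'n \<Rightarrow> real. convex_on UNIV f \<and> (\<forall>x. F x \<subseteq> subdiff f x))
         \<longleftrightarrow> passive_system F"
  unfolding passive_system_iff_storage_function
  using storage_function_if_subdiff convex_primitive_if_storage_function by metis

end
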